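(* Let $M$ and $M'$ be two stable matchings in an instance $I$ of SPA-S, and let $M^\land$ be the assignment defined from $M,M'$ in the context. Then $M^\land$ is a stable matching.
   Context: An instance $I$ of SPA-S consists of a finite set $\mathcal{S}$ of students, a finite set $\mathcal{P}$ of projects and a finite set $\mathcal{L}$ of lecturers. Each student $s_i$ ranks a subset $A_i\subseteq\mathcal{P}$ (its acceptable projects) in strict order. Each project is offered by exactly one lecturer; lecturer $l_k$ offers a nonempty set $P_k\subseteq\mathcal{P}$, the $P_k$ partitioning $\mathcal{P}$. Each lecturer $l_k$ ranks in strict order the students who find at least one project of $P_k$ acceptable. Projects have capacities $c_j\in\mathbb{Z}^+$, lecturers have capacities $d_k\in\mathbb{Z}^+$ with $\max\{c_j:p_j\in P_k\}\le d_k\le\sum\{c_j:p_j\in P_k\}$. A pair $(s_i,p_j)$, $p_j$ offered by $l_k$, is acceptable if $p_j\in A_i$ and $s_i$ is on $l_k$'s list. A matching $M$ is a set of acceptable pairs with each student in at most one pair, $|M(p_j)|\le c_j$, $|M(l_k)|\le d_k$, where for an assignment $M$ (a set of acceptable pairs), $M(s_i)$, $M(p_j)$, $M(l_k)$ denote the project of $s_i$, the students assigned to $p_j$, and the students assigned to projects of $l_k$. Undersubscribed/full means fewer than/exactly capacity many assigned students. An acceptable pair $(s_i,p_j)\notin M$ ($p_j$ offered by $l_k$) blocks $M$ if ($s_i$ is unassigned or prefers $p_j$ to $M(s_i)$) and one of: (P1) $p_j$ and $l_k$ undersubscribed; (P2) $p_j$ undersubscribed, $l_k$ full, $s_i\in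 M(l_k)$; (P3) $p_j$ undersubscribed, $l_k$ full, $l_k$ prefers $s_i$ to the worst student of $M(l_k)$; (P4) $p_j$ full and $l_k$ prefers $s_i$ to the worst student of $M(p_j)$. $M$ is stable if it is a matching with no blocking pair. Given stable matchings $M,M'$, $M^\land$ is the assignment in which each student unassigned in both $M$ and $M'$ is unassigned, each student assigned to the same project in both is assigned to that project, and every other student is assigned to the better (in her preference) of her projects in $M$ and $M'$. *)

theory Defs
  imports Main
begin

text \<open>A s: acceptable projects of student s.
  sp s p q: student s strictly prefers project p to project q (strict total order on A s).
  lect p: the lecturer offering p.
  lp l s t: lecturer l strictly prefers student s to student t (strict total order on its list).
  c p, d l: capacities.\<close>

definition strict_total_on :: "'a set \<Rightarrow> ('a \<Rightarrow> 'a \<Rightarrow> bool) \<Rightarrow> bool" where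
  "strict_total_on X r \<longleftrightarrow>
     (\<forall>x y. r x y \<longrightarrow> x \<in> X \<and> y \<in> X) \<and>
     (\<forall>x\<in>X. \<not> r x x) \<and>
     (\<forall>x\<in>X. \<forall>y\<in>X. \<forall>z\<in>X. r x y \<longrightarrow> r y z \<longrightarrow> r x z) \<and>
     (\<forall>x\<in>X. \<forall>y\<in>X. x \<noteq> y \<longrightarrow> r x y \<or> r y x)"

definition offers :: "('p \<Rightarrow> 'l) \<Rightarrow> 'p set \<Rightarrow> 'l \<Rightarrow> 'p set" where
  "offers lect P l = {p \<in> P. lect p = l}"

definition lect_list :: "'s set \<Rightarrow> ('s \<Rightarrow> 'p set) \<Rightarrow> ('p \<Rightarrow> 'l) \<Rightarrow> 'p set \<Rightarrow> 'l \<Rightarrow> 's set" where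
  "lect_list S A lect P l = {s \<in> S. A s \<inter> offers lect P l \<noteq> {}}"

definition spa_instance ::
  "'s set \<Rightarrow> 'p set \<Rightarrow> 'l set \<Rightarrow> ('s \<Rightarrow> 'p set) \<Rightarrow> ('s \<Rightarrow> 'p \<Rightarrow> 'p \<Rightarrow> bool)
   \<Rightarrow> ('p \<Rightarrow> 'l) \<Rightarrow> ('l \<Rightarrow> 's \<Rightarrow> 's \<Rightarrow> bool) \<Rightarrow> ('p \<Rightarrow> nat) \<Rightarrow> ('l \<Rightarrow> nat) \<Rightarrow> bool" where
  "spa_instance S P L A sp lect lp c d \<longleftrightarrow>
     finite S \<and> finite P \<and> finite L \<and>
     (\<forall>s\<in>S. A s \<subseteq> P) \<and>
     (\<forall>s\<in>S. strict_total_on (A s) (sp s)) \<and>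
     (\<forall>p\<in>P. lect p \<in> L) \<and>
     (\<forall>l\<in>L. offers lect P l \<noteq> {}) \<and>
     (\<forall>l\<in>L. strict_total_on (lect_list S A lect P l) (lp l)) \<and>
     (\<forall>p\<in>P. c p > 0) \<and>
     (\<forall>l\<in>L. Max (c ` offers lect P l) \<le> d l \<and> d l \<le> (\<Sum>p\<in>offers lect P l. c p))"

definition acceptable_pair ::
  "'s set \<Rightarrow> 'p set \<Rightarrow> ('s \<Rightarrow> 'p set) \<Rightarrow> ('p \<Rightarrow> 'l) \<Rightarrow> 's \<Rightarrow> 'p \<Rightarrow> bool" where
  "acceptable_pair S P A lect s p \<longleftrightarrow>
     s \<in> S \<and> p \<in> P \<and> p \<in> A s \<and> s \<in> lect_list S A lect P (lect p)"

definition Mp :: "('s \<times> 'p) set \<Rightarrow> 'p \<Rightarrow> 's set" where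
  "Mp M p = {s. (s, p) \<in> M}"

definition Ml :: "('s \<times> 'p) set \<Rightarrow> ('p \<Rightarrow> 'l) \<Rightarrow> 'l \<Rightarrow> 's set" where
  "Ml M lect l = {s. \<exists>p. (s, p) \<in> M \<and> lect p = l}"

definition is_matching ::
  "'s set \<Rightarrow> 'p set \<Rightarrow> ('s \<Rightarrow> 'p set) \<Rightarrow> ('p \<Rightarrow> 'l) \<Rightarrow> ('p \<Rightarrow> nat) \<Rightarrow> ('l \<Rightarrow> nat)
   \<Rightarrow> ('s \<times> 'p) set \<Rightarrow> bool" where
  "is_matching S P A lect c d M \<longleftrightarrow>
     (\<forall>(s, p)\<in>M. acceptable_pair S P A lect s p) \<and>
     (\<forall>s p q. (s, p) \<in> M \<longrightarrow> (s, q) \<in> M \<longrightarrow> p = q) \<and>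
     (\<forall>p\<in>P. card (Mp M p) \<le> c p) \<and>
     (\<forall>l. card (Ml M lect l) \<le> d l)"

definition is_worst :: "('l \<Rightarrow> 's \<Rightarrow> 's \<Rightarrow> bool) \<Rightarrow> 'l \<Rightarrow> 's set \<Rightarrow> 's \<Rightarrow> bool" where
  "is_worst lp l X w \<longleftrightarrow> w \<in> X \<and> (\<forall>u\<in>X. u \<noteq> w \<longrightarrow> lp l u w)"

definition prefers_to_worst :: "('l \<Rightarrow> 's \<Rightarrow> 's \<Rightarrow> bool) \<Rightarrow> 'l \<Rightarrow> 's set \<Rightarrow> 's \<Rightarrow> bool" where
  "prefers_to_worst lp l X s \<longleftrightarrow> (\<exists>w. is_worst lp l X w \<and> lp l s w)"

definition blocking_pair ::
  "'s set \<Rightarrow> 'p set \<Rightarrow> ('s \<Rightarrow> 'p set) \<Rightarrow> ('s \<Rightarrow> 'p \<Rightarrow> 'p \<Rightarrow> bool)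
   \<Rightarrow> ('p \<Rightarrow> 'l) \<Rightarrow> ('l \<Rightarrow> 's \<Rightarrow> 's \<Rightarrow> bool) \<Rightarrow> ('p \<Rightarrow> nat) \<Rightarrow> ('l \<Rightarrow> nat)
   \<Rightarrow> ('s \<times> 'p) set \<Rightarrow> 's \<Rightarrow> 'p \<Rightarrow> bool" where
  "blocking_pair S P A sp lect lp c d M s p \<longleftrightarrow>
     (let l = lect p in
     acceptable_pair S P A lect s p \<and> (s, p) \<notin> M \<and>
     ((\<forall>q. (s, q) \<notin> M) \<or> (\<exists>q. (s, q) \<in> M \<and> sp s p q)) \<and>
     ((card (Mp M p) < c p \<and> card (Ml M lect l) < d l) \<or>
      (card (Mp M p) < c p \<and> card (Ml M lect l) = d l \<and> s \<in> Ml M lect l) \<or>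
      (card (Mp M p) < c p \<and> card (Ml M lect l) = d l \<and> prefers_to_worst lp l (Ml M lect l) s) \<or>
      (card (Mp M p) = c p \<and> prefers_to_worst lp l (Mp M p) s)))"

definition spa_stable ::
  "'s set \<Rightarrow> 'p set \<Rightarrow> ('s \<Rightarrow> 'p set) \<Rightarrow> ('s \<Rightarrow> 'p \<Rightarrow> 'p \<Rightarrow> bool)
   \<Rightarrow> ('p \<Rightarrow> 'l) \<Rightarrow> ('l \<Rightarrow> 's \<Rightarrow> 's \<Rightarrow> bool) \<Rightarrow> ('p \<Rightarrow> nat) \<Rightarrow> ('l \<Rightarrow> nat)
   \<Rightarrow> ('s \<times> 'p) set \<Rightarrow> bool" where
  "spa_stable S P A sp lect lp c d M \<longleftrightarrow>
     is_matching S P A lect c d M \<and>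
     (\<forall>s p. \<not> blocking_pair S P A sp lect lp c d M s p)"

text \<open>M-meet: students with the same project in both keep it; otherwise each student gets the
  better of her projects in M and M' (a student assigned in only one of them gets that project,
  unassigned being worse than any project); students unassigned in both stay unassigned.\<close>
definition meet :: "('s \<Rightarrow> 'p \<Rightarrow> 'p \<Rightarrow> bool) \<Rightarrow> ('s \<times> 'p) set \<Rightarrow> ('s \<times> 'p) set \<Rightarrow> ('s \<times> 'p) set" where
  "meet sp M M' =
     {(s, p). ((s, p) \<in> M \<and> (\<forall>q. (s, q) \<in> M' \<longrightarrow> q = p \<or> sp s p q)) \<or>
              ((s, p) \<in> M' \<and> (\<forall>q. (s, q) \<in> M \<longrightarrow> q = p \<or> sp s p q))}"

end

theory Submission
  imports Defs
begin

(* For a project p, the students assigned to p in M who are better off in M than in M' are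
   its arrivals, and the students assigned to p in M' who are better off in M are its
   departures: passing from M' to the meet, p gains the former and loses the latter.
   Stability of M' bounds the arrivals at p by its departures, unless the lecturer l of p is
   full in M' and ranks all of its M'-students above one of its M-students.  In that case the
   bound holds at l with M and M' exchanged, which together with |M(l)| <= |M'(l)| still bounds
   the arrivals at l by the departures from l.  Summed over all projects the inequality
   reverses, since a departing student is better off in M and so arrives somewhere; hence
   every bound is tight.  Therefore the meet gives every lecturer as many students as M and
   M' do and respects the project capacities, and a student preferring p to her project in
   the meet, with p undersubscribed there, is ranked by p's lecturer below all its students
   in M and in M'. *)

lemma strict_total_on_irrefl: "strict_total_on X r \<Longrightarrow> \<not> r x x"
  unfolding strict_total_on_def by blast

lemma strict_total_on_trans: "strict_total_on X r \<Longrightarrow> r x y \<Longrightarrow> r y z \<Longrightarrow> r x z"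
  unfolding strict_total_on_def by blast

lemma strict_total_on_asym: "strict_total_on X r \<Longrightarrow> r x y \<Longrightarrow> \<not> r y x"
  using strict_total_on_irrefl strict_total_on_trans by metis

lemma strict_total_on_total:
  "strict_total_on X r \<Longrightarrow> x \<in> X \<Longrightarrow> y \<in> X \<Longrightarrow> x \<noteq> y \<Longrightarrow> r x y \<or> r y x"
  unfolding strict_total_on_def by blast

lemma is_worst_exists:
  assumes order: "strict_total_on Y (lp l)" and "finite X" "X \<noteq> {}" "X \<subseteq> Y"
  shows "\<exists>w. is_worst lp l X w"
  using assms(2-4)
proof (induction X rule: finite_ne_induct)
  case (singleton x)
  then show ?case by (auto simp: is_worst_def)
next
  case (insert x F)
  then obtain w where w: "is_worst lp l F w" by auto
  show ?case
  proof (cases "lp l x w")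
    case True
    then show ?thesis using w by (auto simp: is_worst_def)
  next
    case False
    have "x \<noteq> w" using w insert.hyps by (auto simp: is_worst_def)
    then have "lp l w x"
      using strict_total_on_total[OF order, of x w] False w insert.prems by (auto simp: is_worst_def)
    then have "is_worst lp l (insert x F) x"
      using w strict_total_on_trans[OF order] by (auto simp: is_worst_def)
    then show ?thesis ..
  qed
qed

lemma all_above_if_not_prefers_to_worst:
  assumes order: "strict_total_on Y (lp l)" and "finite X" "X \<noteq> {}" "X \<subseteq> Y"
    and "s \<in> Y" "s \<notin> X" "\<not> prefers_to_worst lp l X s"
  shows "\<forall>u\<in>X. lp l u s"
proof -
  obtain w where w: "is_worst lp l X w" using is_worst_exists[of Y lp l X] assms(1-4) by blast
  have "s \<noteq> w" "\<not> lp l s w" using w assms(6,7) by (auto simp: is_worst_def prefers_to_worst_def)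
  then have "lp l w s"
    using strict_total_on_total[OF order assms(5), of w] w assms(4) by (auto simp: is_worst_def)
  then show ?thesis using w strict_total_on_trans[OF order] by (auto simp: is_worst_def)
qed

lemma not_prefers_to_worst_if_all_above:
  "strict_total_on Y (lp l) \<Longrightarrow> \<forall>u\<in>X. lp l u s \<Longrightarrow> \<not> prefers_to_worst lp l X s"
  unfolding prefers_to_worst_def is_worst_def using strict_total_on_asym by metis

lemma card_Un3_disjoint:
  assumes "finite A" "finite B" "finite C" "A \<inter> B = {}" "A \<inter> C = {}" "B \<inter> C = {}"
  shows "card (A \<union> B \<union> C) = card A + card B + card C"
  using assms by (simp add: card_Un_disjoint Int_Un_distrib2)

lemma single_valued_prefers_iff:
  "single_valued M \<Longrightarrow>
     ((\<forall>q. (s, q) \<notin> M) \<or> (\<exists>q. (s, q) \<in> M \<and> r p q)) \<longleftrightarrow> (\<forall>q. (s, q) \<in> M \<longrightarrow> r p q)"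
  unfolding single_valued_def by blast

locale spa =
  fixes S :: "'s set" and P :: "'p set" and L :: "'l set"
    and A :: "'s \<Rightarrow> 'p set" and sp :: "'s \<Rightarrow> 'p \<Rightarrow> 'p \<Rightarrow> bool"
    and lect :: "'p \<Rightarrow> 'l" and lp :: "'l \<Rightarrow> 's \<Rightarrow> 's \<Rightarrow> bool"
    and c :: "'p \<Rightarrow> nat" and d :: "'l \<Rightarrow> nat"
  assumes valid_instance: "spa_instance S P L A sp lect lp c d"
begin

abbreviation offered :: "'l \<Rightarrow> 'p set" where "offered l \<equiv> offers lect P l"
abbreviation matching :: "('s \<times> 'p) set \<Rightarrow> bool" where "matching \<equiv> is_matching S P A lect c d"
abbreviation stable :: "('s \<times> 'p) set \<Rightarrow> bool" where "stable \<equiv> spa_stable S P A sp lect lp c d"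

lemma finite_S: "finite S" and finite_P: "finite P" and finite_L: "finite L"
  using valid_instance by (auto simp: spa_instance_def)

lemma sp_order: "s \<in> S \<Longrightarrow> strict_total_on (A s) (sp s)"
  using valid_instance by (auto simp: spa_instance_def)

lemma lp_order: "l \<in> L \<Longrightarrow> strict_total_on (lect_list S A lect P l) (lp l)"
  using valid_instance by (auto simp: spa_instance_def)

lemma lect_in_L: "p \<in> P \<Longrightarrow> lect p \<in> L"
  using valid_instance by (auto simp: spa_instance_def)

lemma capacity_pos: "p \<in> P \<Longrightarrow> 0 < c p"
  using valid_instance by (auto simp: spa_instance_def)

lemma offered_iff: "p \<in> offered l \<longleftrightarrow> p \<in> P \<and> lect p = l"
  by (simp add: offers_def)

lemma finite_offered: "finite (offered l)"
  using finite_P by (simp add: offers_def)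

lemma capacity_le_lecturer_capacity:
  assumes "p \<in> P" shows "c p \<le> d (lect p)"
proof -
  have "c p \<le> Max (c ` offered (lect p))"
    using finite_offered assms by (auto simp: offers_def)
  also have "\<dots> \<le> d (lect p)"
    using valid_instance lect_in_L[OF assms] by (auto simp: spa_instance_def)
  finally show ?thesis .
qed

lemma sum_over_lecturers: "(\<Sum>p\<in>P. f p) = (\<Sum>l\<in>L. \<Sum>p\<in>offered l. f p)"
proof -
  have "P = (\<Union>l\<in>L. offered l)" using lect_in_L by (auto simp: offers_def)
  moreover have "\<forall>l\<in>L. \<forall>l'\<in>L. l \<noteq> l' \<longrightarrow> offered l \<inter> offered l' = {}"
    by (auto simp: offers_def)
  ultimately show ?thesis
    using sum.UNION_disjoint[OF finite_L _, of offered f] finite_offered by simp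
qed

lemma finite_Mp: "M \<subseteq> S \<times> P \<Longrightarrow> finite (Mp M p)"
  by (rule finite_subset[OF _ finite_S]) (auto simp: Mp_def)

lemma finite_Ml: "M \<subseteq> S \<times> P \<Longrightarrow> finite (Ml M lect l)"
  by (rule finite_subset[OF _ finite_S]) (auto simp: Ml_def)

lemma card_Ml_eq_sum:
  assumes "N \<subseteq> S \<times> P" "single_valued N"
  shows "card (Ml N lect l) = (\<Sum>p\<in>offered l. card (Mp N p))"
proof -
  have "Ml N lect l = (\<Union>p\<in>offered l. Mp N p)"
    using assms(1) by (auto simp: Ml_def Mp_def offers_def)
  moreover have "\<forall>p\<in>offered l. finite (Mp N p)"
    using finite_Mp[OF assms(1)] by blast
  moreover have "\<forall>p\<in>offered l. \<forall>q\<in>offered l. p \<noteq> q \<longrightarrow> Mp N p \<inter> Mp N q = {}"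
    using assms(2) by (auto simp: Mp_def single_valued_def)
  ultimately show ?thesis
    using card_UN_disjoint[OF finite_offered] by simp
qed

lemma stable_matching: "stable M \<Longrightarrow> matching M"
  by (simp add: spa_stable_def)

lemma matching_acceptable:
  "matching M \<Longrightarrow> (s, p) \<in> M \<Longrightarrow> s \<in> S \<and> p \<in> P \<and> p \<in> A s \<and> s \<in> lect_list S A lect P (lect p)"
  unfolding is_matching_def acceptable_pair_def by blast

lemma matching_subset: "matching M \<Longrightarrow> M \<subseteq> S \<times> P"
  using matching_acceptable by fast

lemma matching_single_valued: "matching M \<Longrightarrow> single_valued M"
  unfolding is_matching_def single_valued_def by blast

lemma matching_project_capacity: "matching M \<Longrightarrow> p \<in> P \<Longrightarrow> card (Mp M p) \<le> c p"
  unfolding is_matching_def by blast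

lemma matching_lecturer_capacity: "matching M \<Longrightarrow> card (Ml M lect l) \<le> d l"
  unfolding is_matching_def by blast

lemma Ml_subset_lect_list: "matching M \<Longrightarrow> Ml M lect l \<subseteq> lect_list S A lect P l"
  using matching_acceptable by (fastforce simp: Ml_def)

lemma Mp_subset_Ml: "Mp M p \<subseteq> Ml M lect (lect p)"
  by (auto simp: Mp_def Ml_def)

lemma card_Ml_matching: "matching M \<Longrightarrow> card (Ml M lect l) = (\<Sum>p\<in>offered l. card (Mp M p))"
  using card_Ml_eq_sum matching_subset matching_single_valued by blast

definition better_off :: "('s \<times> 'p) set \<Rightarrow> ('s \<times> 'p) set \<Rightarrow> 's set" where
  "better_off M M' = {s. \<exists>p. (s, p) \<in> M \<and> (\<forall>q. (s, q) \<in> M' \<longrightarrow> sp s p q)}"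

lemma better_off_iff:
  assumes "matching M" "(s, p) \<in> M"
  shows "s \<in> better_off M M' \<longleftrightarrow> (\<forall>q. (s, q) \<in> M' \<longrightarrow> sp s p q)"
  using assms matching_single_valued unfolding better_off_def single_valued_def by blast

lemma better_off_not_in:
  "matching M \<Longrightarrow> (s, p) \<in> M \<Longrightarrow> s \<in> better_off M M' \<Longrightarrow> (s, p) \<notin> M'"
  using better_off_iff matching_acceptable sp_order strict_total_on_irrefl by metis

lemma better_off_asym:
  assumes "matching M" "s \<in> better_off M M'"
  shows "s \<notin> better_off M' M"
proof
  assume "s \<in> better_off M' M"
  then obtain q where q: "(s, q) \<in> M'" "\<forall>r. (s, r) \<in> M \<longrightarrow> sp s q r"
    by (auto simp: better_off_def)
  obtain p where p: "(s, p) \<in> M" "\<forall>r. (s, r) \<in> M' \<longrightarrow> sp s p r"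
    using assms(2) by (auto simp: better_off_def)
  have "strict_total_on (A s) (sp s)" using matching_acceptable[OF assms(1) p(1)] sp_order by blast
  then show False using p q strict_total_on_asym by metis
qed

lemma better_off_cases:
  assumes "matching M" "matching M'" "(s, p) \<in> M" "(s, p) \<notin> M'"
  shows "s \<in> better_off M M' \<or> s \<in> better_off M' M"
proof (rule disjCI)
  assume not_better: "s \<notin> better_off M' M"
  have "sp s p q" if q: "(s, q) \<in> M'" for q
  proof -
    have "\<not> (\<forall>r. (s, r) \<in> M \<longrightarrow> sp s q r)"
      using not_better better_off_iff[OF assms(2) q] by simp
    then have "\<not> sp s q p"
      using matching_single_valued[OF assms(1)] assms(3) by (auto simp: single_valued_def)
    moreover have "q \<noteq> p" using q assms(4) by auto
    moreover have "strict_total_on (A s) (sp s)" "p \<in> A s" "q \<in> A s"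
      using matching_acceptable assms(1-3) q sp_order by auto
    ultimately show ?thesis using strict_total_on_total by metis
  qed
  then show "s \<in> better_off M M'" using better_off_iff[OF assms(1,3)] by simp
qed

lemma Mp_decomp:
  assumes "matching M" "matching M'"
  shows "Mp M p = (Mp M p \<inter> Mp M' p) \<union> (Mp M p \<inter> better_off M M') \<union> (Mp M p \<inter> better_off M' M)"
  using better_off_cases[OF assms] by (auto simp: Mp_def)

lemma meet_sym: "meet sp M M' = meet sp M' M"
  by (auto simp: meet_def)

lemma meet_subset: "meet sp M M' \<subseteq> M \<union> M'"
  by (auto simp: meet_def)

lemma meet_side_iff:
  assumes "matching M" "matching M'" "(s, p) \<in> M"
  shows "(\<forall>q. (s, q) \<in> M' \<longrightarrow> q = p \<or> sp s p q) \<longleftrightarrow> (s, p) \<in> M' \<or> s \<in> better_off M M'"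
  using better_off_iff[OF assms(1,3)] matching_single_valued[OF assms(2)]
  by (auto simp: single_valued_def)

lemma meet_iff:
  assumes "matching M" "matching M'"
  shows "(s, p) \<in> meet sp M M' \<longleftrightarrow>
    (s, p) \<in> M \<and> (s, p) \<in> M' \<or> (s, p) \<in> M \<and> s \<in> better_off M M' \<or>
    (s, p) \<in> M' \<and> s \<in> better_off M' M"
  using meet_side_iff[OF assms] meet_side_iff[OF assms(2,1)] unfolding meet_def by blast

lemma Mp_meet:
  assumes "matching M" "matching M'"
  shows "Mp (meet sp M M') p =
    (Mp M p \<inter> Mp M' p) \<union> (Mp M p \<inter> better_off M M') \<union> (Mp M' p \<inter> better_off M' M)"
  by (auto simp: Mp_def meet_iff[OF assms])

definition arrivals :: "('s \<times> 'p) set \<Rightarrow> ('s \<times> 'p) set \<Rightarrow> 'p \<Rightarrow> nat" where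
  "arrivals M M' p = card (Mp M p \<inter> better_off M M')"

definition departures :: "('s \<times> 'p) set \<Rightarrow> ('s \<times> 'p) set \<Rightarrow> 'p \<Rightarrow> nat" where
  "departures M M' p = card (Mp M' p \<inter> better_off M M')"

lemma card_Mp_split:
  assumes "matching M" "matching M'"
  shows "card (Mp M p) = card (Mp M p \<inter> Mp M' p) + arrivals M M' p + departures M' M p"
proof -
  let ?A = "Mp M p \<inter> Mp M' p" and ?B = "Mp M p \<inter> better_off M M'"
    and ?C = "Mp M p \<inter> better_off M' M"
  have "finite (Mp M p)" using finite_Mp matching_subset assms(1) by blast
  moreover have "?A \<inter> ?B = {}" using better_off_not_in[OF assms(1)] by (auto simp: Mp_def)
  moreover have "?A \<inter> ?C = {}" using better_off_not_in[OF assms(2)] by (auto simp: Mp_def)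
  moreover have "?B \<inter> ?C = {}" using better_off_asym[OF assms(1)] by blast
  ultimately have "card (?A \<union> ?B \<union> ?C) = card ?A + card ?B + card ?C"
    by (intro card_Un3_disjoint) auto
  then show ?thesis using Mp_decomp[OF assms, of p] by (simp add: arrivals_def departures_def)
qed

lemma card_Mp_meet:
  assumes "matching M" "matching M'"
  shows "card (Mp (meet sp M M') p) = card (Mp M p \<inter> Mp M' p) + arrivals M M' p + arrivals M' M p"
proof -
  let ?A = "Mp M p \<inter> Mp M' p" and ?B = "Mp M p \<inter> better_off M M'"
    and ?C = "Mp M' p \<inter> better_off M' M"
  have "finite (Mp M p)" "finite (Mp M' p)" using finite_Mp matching_subset assms by blast+
  moreover have "?A \<inter> ?B = {}" using better_off_not_in[OF assms(1)] by (auto simp: Mp_def)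
  moreover have "?A \<inter> ?C = {}" using better_off_not_in[OF assms(2)] by (auto simp: Mp_def)
  moreover have "?B \<inter> ?C = {}" using better_off_asym[OF assms(1)] by blast
  ultimately have "card (?A \<union> ?B \<union> ?C) = card ?A + card ?B + card ?C"
    by (intro card_Un3_disjoint) auto
  then show ?thesis using Mp_meet[OF assms, of p] by (simp add: arrivals_def)
qed

lemma stable_student_condition:
  "stable M \<Longrightarrow> \<forall>q. (s, q) \<in> M \<longrightarrow> sp s p q \<Longrightarrow> (\<forall>q. (s, q) \<notin> M) \<or> (\<exists>q. (s, q) \<in> M \<and> sp s p q)"
  using single_valued_prefers_iff matching_single_valued by (metis spa_stable_def)

lemma stable_lecturer_above:
  assumes "stable M" "acceptable_pair S P A lect s p" "(s, p) \<notin> M"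
    and "\<forall>q. (s, q) \<in> M \<longrightarrow> sp s p q" "card (Mp M p) < c p"
  shows "card (Ml M lect (lect p)) = d (lect p) \<and> (\<forall>u\<in>Ml M lect (lect p). lp (lect p) u s)"
proof -
  let ?l = "lect p"
  have m: "matching M" using assms(1) by (rule stable_matching)
  have p: "p \<in> P" and s: "s \<in> lect_list S A lect P ?l"
    using assms(2) by (auto simp: acceptable_pair_def)
  have not_blocking: "\<not> blocking_pair S P A sp lect lp c d M s p"
    using assms(1) by (simp add: spa_stable_def)
  have stud: "(\<forall>q. (s, q) \<notin> M) \<or> (\<exists>q. (s, q) \<in> M \<and> sp s p q)"
    using stable_student_condition[OF assms(1,4)] .
  have "\<not> card (Ml M lect ?l) < d ?l"
    using not_blocking assms(2,3,5) stud by (auto simp: blocking_pair_def Let_def)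
  then have full: "card (Ml M lect ?l) = d ?l"
    using matching_lecturer_capacity[OF m] by (meson nat_less_le)
  moreover have "s \<notin> Ml M lect ?l" "\<not> prefers_to_worst lp ?l (Ml M lect ?l) s"
    using full not_blocking assms(2,3,5) stud by (auto simp: blocking_pair_def Let_def)
  moreover have "Ml M lect ?l \<noteq> {}"
    using full capacity_pos[OF p] capacity_le_lecturer_capacity[OF p] by auto
  ultimately have "\<forall>u\<in>Ml M lect ?l. lp ?l u s"
    using all_above_if_not_prefers_to_worst[where lp = lp and l = "lect p", OF lp_order[OF lect_in_L[OF p]]
        finite_Ml[OF matching_subset[OF m]] _ Ml_subset_lect_list[OF m] s] by blast
  with full show ?thesis ..
qed

lemma stable_project_above:
  assumes "stable M" "acceptable_pair S P A lect s p" "(s, p) \<notin> M"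
    and "\<forall>q. (s, q) \<in> M \<longrightarrow> sp s p q"
  shows "\<forall>u\<in>Mp M p. lp (lect p) u s"
proof (cases "card (Mp M p) < c p")
  case True
  then have "\<forall>u\<in>Ml M lect (lect p). lp (lect p) u s"
    using stable_lecturer_above[OF assms] by simp
  then show ?thesis using Mp_subset_Ml[of M p] by blast
next
  case False
  have m: "matching M" using assms(1) by (rule stable_matching)
  have p: "p \<in> P" and s: "s \<in> lect_list S A lect P (lect p)"
    using assms(2) by (auto simp: acceptable_pair_def)
  have full: "card (Mp M p) = c p" using False matching_project_capacity[OF m p] by simp
  have not_blocking: "\<not> blocking_pair S P A sp lect lp c d M s p"
    using assms(1) by (simp add: spa_stable_def)
  have stud: "(\<forall>q. (s, q) \<notin> M) \<or> (\<exists>q. (s, q) \<in> M \<and> sp s p q)"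
    using stable_student_condition[OF assms(1,4)] .
  have "\<not> prefers_to_worst lp (lect p) (Mp M p) s"
    using not_blocking assms(2,3) stud full unfolding blocking_pair_def Let_def by blast
  moreover have "Mp M p \<noteq> {}" using full capacity_pos[OF p] by auto
  moreover have "s \<notin> Mp M p" using assms(3) by (simp add: Mp_def)
  moreover have "Mp M p \<subseteq> lect_list S A lect P (lect p)"
    using Mp_subset_Ml[of M p] Ml_subset_lect_list[OF m, of "lect p"] by (rule subset_trans)
  ultimately show ?thesis
    using all_above_if_not_prefers_to_worst[where lp = lp and l = "lect p", OF lp_order[OF lect_in_L[OF p]]
        finite_Mp[OF matching_subset[OF m]] _ _ s] by blast
qed

lemma arrival_unblocked:
  assumes "matching M" "s \<in> Mp M p \<inter> better_off M M'"
  shows "acceptable_pair S P A lect s p \<and> (s, p) \<notin> M' \<and> (\<forall>q. (s, q) \<in> M' \<longrightarrow> sp s p q)"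
proof -
  have sp: "(s, p) \<in> M" using assms(2) by (simp add: Mp_def)
  show ?thesis
    using matching_acceptable[OF assms(1) sp] better_off_not_in[OF assms(1) sp]
      better_off_iff[OF assms(1) sp] assms(2) by (simp add: acceptable_pair_def)
qed

lemma arrivals_exclusive:
  assumes "stable M" "stable M'"
  shows "arrivals M M' p = 0 \<or> arrivals M' M p = 0"
proof (rule ccontr)
  have m: "matching M" "matching M'" using assms(1,2) by (simp_all add: stable_matching)
  assume "\<not> (arrivals M M' p = 0 \<or> arrivals M' M p = 0)"
  then have "Mp M p \<inter> better_off M M' \<noteq> {}" "Mp M' p \<inter> better_off M' M \<noteq> {}"
    by (auto simp: arrivals_def)
  then obtain s t where s: "s \<in> Mp M p \<inter> better_off M M'" and t: "t \<in> Mp M' p \<inter> better_off M' M"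
    by blast
  have "lp (lect p) t s"
    using stable_project_above[OF assms(2)] arrival_unblocked[OF m(1) s] t by blast
  moreover have "lp (lect p) s t"
    using stable_project_above[OF assms(1)] arrival_unblocked[OF m(2) t] s by blast
  moreover have "p \<in> P" using s matching_acceptable[OF m(1), of s p] by (simp add: Mp_def)
  ultimately show False using strict_total_on_asym[OF lp_order[OF lect_in_L]] by blast
qed

definition full_above :: "('s \<times> 'p) set \<Rightarrow> ('s \<times> 'p) set \<Rightarrow> 'l \<Rightarrow> bool" where
  "full_above M M' l \<longleftrightarrow>
     card (Ml M lect l) = d l \<and> (\<exists>s0\<in>Ml M' lect l. \<forall>u\<in>Ml M lect l. lp l u s0)"

lemma full_above_asym: "l \<in> L \<Longrightarrow> full_above M M' l \<Longrightarrow> \<not> full_above M' M l"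
  unfolding full_above_def using strict_total_on_asym[OF lp_order] by metis

lemma full_above_if_arrival:
  assumes "stable M" "stable M'" "0 < arrivals M M' p" "card (Mp M' p) < c p"
  shows "full_above M' M (lect p)"
proof -
  have m: "matching M" using assms(1) by (rule stable_matching)
  have "Mp M p \<inter> better_off M M' \<noteq> {}" using assms(3) by (auto simp: arrivals_def)
  then obtain s where s: "s \<in> Mp M p \<inter> better_off M M'" by blast
  have "card (Ml M' lect (lect p)) = d (lect p) \<and> (\<forall>u\<in>Ml M' lect (lect p). lp (lect p) u s)"
    using stable_lecturer_above[OF assms(2)] arrival_unblocked[OF m s] assms(4) by blast
  moreover have "s \<in> Ml M lect (lect p)" using s Mp_subset_Ml[of M p] by blast
  ultimately show ?thesis unfolding full_above_def by blast
qed

lemma arrivals_le_departures: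
  assumes "stable M" "stable M'" "p \<in> P" "\<not> full_above M' M (lect p)"
  shows "arrivals M M' p \<le> departures M M' p"
proof (cases "arrivals M M' p = 0")
  case False
  have m: "matching M" "matching M'" using assms(1,2) by (simp_all add: stable_matching)
  have "card (Mp M' p) = c p"
    using full_above_if_arrival[OF assms(1,2)] False assms(4)
      matching_project_capacity[OF m(2) assms(3)] by (meson le_neq_implies_less neq0_conv)
  moreover have "arrivals M' M p = 0" using arrivals_exclusive[OF assms(1,2), of p] False by simp
  ultimately show ?thesis
    using card_Mp_split[OF m, of p] card_Mp_split[OF m(2,1), of p]
      matching_project_capacity[OF m(1) assms(3)] by (simp add: Int_commute)
qed simp

lemma sum_arrivals_le_sum_departures:
  assumes "stable M" "stable M'"
  shows "(\<Sum>p\<in>offered l. arrivals M M' p) \<le> (\<Sum>p\<in>offered l. departures M M' p)"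
proof (cases "full_above M' M l")
  case False
  then show ?thesis
    using arrivals_le_departures[OF assms] by (intro sum_mono) (auto simp: offered_iff)
next
  case True
  have m: "matching M" "matching M'" using assms(1,2) by (simp_all add: stable_matching)
  obtain s0 p0 where "(s0, p0) \<in> M" "lect p0 = l"
    using True by (auto simp: full_above_def Ml_def)
  then have "l \<in> L" using matching_acceptable[OF m(1)] lect_in_L by blast
  then have "\<not> full_above M M' l" using full_above_asym True by blast
  then have reverse: "(\<Sum>p\<in>offered l. arrivals M' M p) \<le> (\<Sum>p\<in>offered l. departures M' M p)"
    using arrivals_le_departures[OF assms(2,1)] by (intro sum_mono) (auto simp: offered_iff)
  have "card (Ml M lect l) \<le> card (Ml M' lect l)"
    using True matching_lecturer_capacity[OF m(1)] by (simp add: full_above_def)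
  then have "(\<Sum>p\<in>offered l. card (Mp M p \<inter> Mp M' p) + arrivals M M' p + departures M' M p)
      \<le> (\<Sum>p\<in>offered l. card (Mp M p \<inter> Mp M' p) + arrivals M' M p + departures M M' p)"
    using card_Mp_split[OF m] card_Mp_split[OF m(2,1)] card_Ml_matching[OF m(1)]
      card_Ml_matching[OF m(2)] by (simp add: Int_commute)
  with reverse show ?thesis by (simp add: sum.distrib)
qed

lemma sum_card_Mp_Int:
  assumes "matching M"
  shows "(\<Sum>p\<in>P. card (Mp M p \<inter> B)) = card (Domain M \<inter> B)"
proof -
  have domain: "Domain M \<inter> B = (\<Union>p\<in>P. Mp M p \<inter> B)"
    using matching_subset[OF assms] by (auto simp: Mp_def)
  have "\<forall>p\<in>P. finite (Mp M p \<inter> B)"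
    using finite_Mp[OF matching_subset[OF assms]] by blast
  moreover have "\<forall>p\<in>P. \<forall>q\<in>P. p \<noteq> q \<longrightarrow> (Mp M p \<inter> B) \<inter> (Mp M q \<inter> B) = {}"
    using matching_single_valued[OF assms] by (auto simp: Mp_def single_valued_def)
  ultimately show ?thesis unfolding domain by (rule card_UN_disjoint[OF finite_P, symmetric])
qed

lemma sum_departures_le_sum_arrivals:
  assumes "matching M" "matching M'"
  shows "(\<Sum>p\<in>P. departures M M' p) \<le> (\<Sum>p\<in>P. arrivals M M' p)"
proof -
  let ?B = "better_off M M'"
  have "?B \<subseteq> Domain M" by (auto simp: better_off_def)
  moreover have "?B \<subseteq> S" using matching_acceptable[OF assms(1)] by (auto simp: better_off_def)
  then have "finite ?B" using finite_S by (rule finite_subset)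
  ultimately have "card (Domain M' \<inter> ?B) \<le> card (Domain M \<inter> ?B)"
    by (simp add: Int_absorb1 card_mono)
  then show ?thesis
    unfolding arrivals_def departures_def sum_card_Mp_Int[OF assms(1)] sum_card_Mp_Int[OF assms(2)] .
qed

lemma sum_arrivals_eq_sum_departures:
  assumes "stable M" "stable M'"
  shows "(\<Sum>p\<in>offered l. arrivals M M' p) = (\<Sum>p\<in>offered l. departures M M' p)"
proof (cases "l \<in> L")
  case True
  let ?f = "\<lambda>l. \<Sum>p\<in>offered l. arrivals M M' p" and ?g = "\<lambda>l. \<Sum>p\<in>offered l. departures M M' p"
  have m: "matching M" "matching M'" using assms(1,2) by (simp_all add: stable_matching)
  have le: "?f k \<le> ?g k" for k using sum_arrivals_le_sum_departures[OF assms] .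
  have "sum ?g L \<le> sum ?f L"
    using sum_departures_le_sum_arrivals[OF m] by (simp add: sum_over_lecturers)
  then have "sum ?f L = sum ?g L" using sum_mono[of L ?f ?g] le by simp
  then show ?thesis using sum_mono_inv[of ?f L ?g] le True finite_L by blast
next
  case False
  then have "offered l = {}" using lect_in_L by (auto simp: offered_iff)
  then show ?thesis by simp
qed

lemma arrivals_eq_departures:
  assumes "stable M" "stable M'" "p \<in> P" "\<not> full_above M' M (lect p)"
  shows "arrivals M M' p = departures M M' p"
proof (rule sum_mono_inv[OF sum_arrivals_eq_sum_departures[OF assms(1,2), of "lect p"]])
  show "arrivals M M' q \<le> departures M M' q" if "q \<in> offered (lect p)" for q
    using arrivals_le_departures[OF assms(1,2)] assms(4) that by (simp add: offered_iff)
qed (use assms(3) finite_offered in \<open>simp_all add: offered_iff\<close>)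

lemma meet_subset_SP: "matching M \<Longrightarrow> matching M' \<Longrightarrow> meet sp M M' \<subseteq> S \<times> P"
  using meet_subset[of M M'] matching_subset[of M] matching_subset[of M'] by blast

lemma meet_single_valued:
  assumes "matching M" "matching M'"
  shows "single_valued (meet sp M M')"
proof (rule single_valuedI)
  fix s p q assume sp: "(s, p) \<in> meet sp M M'" and sq: "(s, q) \<in> meet sp M M'"
  have "s \<in> S" using sp meet_subset_SP[OF assms] by blast
  then have "\<not> (sp s p q \<and> sp s q p)" using strict_total_on_asym[OF sp_order] by blast
  then show "p = q"
    using sp sq matching_single_valued[OF assms(1)] matching_single_valued[OF assms(2)]
    unfolding meet_def single_valued_def by blast
qed

lemma card_Ml_meet:
  assumes "stable M" "stable M'"
  shows "card (Ml (meet sp M M') lect l) = card (Ml M lect l)"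
proof -
  have m: "matching M" "matching M'" using assms(1,2) by (simp_all add: stable_matching)
  have "card (Ml (meet sp M M') lect l) =
      (\<Sum>p\<in>offered l. card (Mp M p \<inter> Mp M' p) + arrivals M M' p + arrivals M' M p)"
    using card_Ml_eq_sum[OF meet_subset_SP[OF m] meet_single_valued[OF m]] card_Mp_meet[OF m]
    by simp
  also have "\<dots> = (\<Sum>p\<in>offered l. card (Mp M p \<inter> Mp M' p) + arrivals M M' p + departures M' M p)"
    using sum_arrivals_eq_sum_departures[OF assms(2,1), of l] by (simp add: sum.distrib)
  also have "\<dots> = card (Ml M lect l)"
    using card_Ml_matching[OF m(1)] card_Mp_split[OF m] by simp
  finally show ?thesis .
qed

lemma meet_project_capacity:
  assumes "stable M" "stable M'" "p \<in> P"
  shows "card (Mp (meet sp M M') p) \<le> c p"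
proof -
  have m: "matching M" "matching M'" using assms(1,2) by (simp_all add: stable_matching)
  have "card (Mp (meet sp M M') p) \<le> card (Mp M p) \<or> card (Mp (meet sp M M') p) \<le> card (Mp M' p)"
    using arrivals_exclusive[OF assms(1,2), of p] card_Mp_meet[OF m, of p]
      card_Mp_split[OF m, of p] card_Mp_split[OF m(2,1), of p] by (auto simp: Int_commute)
  then show ?thesis
    using matching_project_capacity[OF m(1) assms(3)] matching_project_capacity[OF m(2) assms(3)]
    by linarith
qed

lemma meet_is_matching:
  assumes "stable M" "stable M'"
  shows "matching (meet sp M M')"
proof -
  have m: "matching M" "matching M'" using assms(1,2) by (simp_all add: stable_matching)
  have "\<forall>(s, p)\<in>meet sp M M'. acceptable_pair S P A lect s p"
    using meet_subset[of M M'] m unfolding is_matching_def by blast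
  moreover have "\<forall>l. card (Ml (meet sp M M') lect l) \<le> d l"
    using card_Ml_meet[OF assms] matching_lecturer_capacity[OF m(1)] by simp
  ultimately show ?thesis
    using meet_single_valued[OF m] meet_project_capacity[OF assms]
    unfolding is_matching_def single_valued_def by blast
qed

lemma meet_at_least_as_good:
  assumes "matching M" "matching M'" "(s, q) \<in> M"
  shows "\<exists>r. (s, r) \<in> meet sp M M' \<and> (r = q \<or> sp s r q)"
proof (cases "(s, q) \<in> M' \<or> s \<in> better_off M M'")
  case True
  then show ?thesis using meet_iff[OF assms(1,2)] assms(3) by blast
next
  case False
  then have better: "s \<in> better_off M' M" using better_off_cases[OF assms] by blast
  then obtain r where "(s, r) \<in> M'" "\<forall>q. (s, q) \<in> M \<longrightarrow> sp s r q"
    by (auto simp: better_off_def)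
  then show ?thesis using meet_iff[OF assms(1,2)] better assms(3) by blast
qed

lemma prefers_to_meet_imp_prefers:
  assumes "matching M" "matching M'" "s \<in> S" "\<forall>q. (s, q) \<in> meet sp M M' \<longrightarrow> sp s p q"
  shows "\<forall>q. (s, q) \<in> M \<longrightarrow> sp s p q"
proof (intro allI impI)
  fix q assume "(s, q) \<in> M"
  then obtain r where "(s, r) \<in> meet sp M M'" "r = q \<or> sp s r q"
    using meet_at_least_as_good[OF assms(1,2)] by blast
  then show "sp s p q" using assms(4) strict_total_on_trans[OF sp_order[OF assms(3)]] by blast
qed

lemma full_above_if_meet_undersubscribed:
  assumes "stable M" "stable M'" "p \<in> P"
    and "card (Mp (meet sp M M') p) < c p" "card (Mp M' p) = c p"
  shows "full_above M' M (lect p)"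
proof (rule ccontr)
  have m: "matching M" "matching M'" using assms(1,2) by (simp_all add: stable_matching)
  assume "\<not> full_above M' M (lect p)"
  then have "arrivals M M' p = departures M M' p"
    using arrivals_eq_departures[OF assms(1-3)] by blast
  then have "card (Mp (meet sp M M') p) = card (Mp M' p)"
    using card_Mp_meet[OF m, of p] card_Mp_split[OF m(2,1), of p] by (simp add: Int_commute)
  then show False using assms(4,5) by simp
qed

lemma meet_lecturer_above_if_full:
  assumes "stable M" "stable M'" "acceptable_pair S P A lect s p"
    and "(s, p) \<notin> M" "\<forall>q. (s, q) \<in> M \<longrightarrow> sp s p q"
    and "card (Mp (meet sp M M') p) < c p" "card (Mp M' p) = c p"
  shows "card (Ml (meet sp M M') lect (lect p)) = d (lect p) \<and>
    (\<forall>u\<in>Ml M lect (lect p) \<union> Ml M' lect (lect p). lp (lect p) u s)"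
proof -
  let ?l = "lect p"
  have m: "matching M" using assms(1) by (rule stable_matching)
  have p: "p \<in> P" using assms(3) by (simp add: acceptable_pair_def)
  have "full_above M' M ?l" using full_above_if_meet_undersubscribed[OF assms(1,2) p assms(6,7)] .
  then have "\<not> full_above M M' ?l" using full_above_asym[OF lect_in_L[OF p]] by blast
  then have "card (Mp M p) \<noteq> c p"
    using full_above_if_meet_undersubscribed[OF assms(2,1) p] assms(6) meet_sym by metis
  then have "card (Mp M p) < c p" using matching_project_capacity[OF m p] by simp
  then have full: "card (Ml M lect ?l) = d ?l" and above: "\<forall>u\<in>Ml M lect ?l. lp ?l u s"
    using stable_lecturer_above[OF assms(1,3-5)] by simp_all
  obtain s0 where "s0 \<in> Ml M lect ?l" "\<forall>u\<in>Ml M' lect ?l. lp ?l u s0"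
    using \<open>full_above M' M ?l\<close> by (auto simp: full_above_def)
  then have "\<forall>u\<in>Ml M' lect ?l. lp ?l u s"
    using above strict_total_on_trans[OF lp_order[OF lect_in_L[OF p]]] by blast
  then show ?thesis using full above card_Ml_meet[OF assms(1,2)] by auto
qed

lemma meet_lecturer_above:
  assumes "stable M" "stable M'" "acceptable_pair S P A lect s p"
    and "(s, p) \<notin> M" "\<forall>q. (s, q) \<in> M \<longrightarrow> sp s p q"
    and "(s, p) \<notin> M'" "\<forall>q. (s, q) \<in> M' \<longrightarrow> sp s p q"
    and "card (Mp (meet sp M M') p) < c p"
  shows "card (Ml (meet sp M M') lect (lect p)) = d (lect p) \<and>
    (\<forall>u\<in>Ml M lect (lect p) \<union> Ml M' lect (lect p). lp (lect p) u s)"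
proof -
  have m: "matching M" "matching M'" using assms(1,2) by (simp_all add: stable_matching)
  have p: "p \<in> P" using assms(3) by (simp add: acceptable_pair_def)
  consider "card (Mp M' p) = c p" | "card (Mp M p) = c p" | "card (Mp M p) < c p" "card (Mp M' p) < c p"
    using matching_project_capacity[OF m(1) p] matching_project_capacity[OF m(2) p] by linarith
  then show ?thesis
  proof cases
    case 1
    then show ?thesis using meet_lecturer_above_if_full[OF assms(1-5,8)] by blast
  next
    case 2
    have "card (Mp (meet sp M' M) p) < c p" using assms(8) by (simp add: meet_sym)
    from meet_lecturer_above_if_full[OF assms(2,1,3,6,7) this 2] show ?thesis
      by (simp add: meet_sym Un_commute)
  next
    case 3
    then show ?thesis
      using stable_lecturer_above[OF assms(1,3-5)] stable_lecturer_above[OF assms(2,3,6,7)]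
        card_Ml_meet[OF assms(1,2)] by auto
  qed
qed

lemma meet_no_blocking_pair:
  assumes "stable M" "stable M'"
  shows "\<not> blocking_pair S P A sp lect lp c d (meet sp M M') s p"
proof
  let ?N = "meet sp M M'" and ?l = "lect p"
  have m: "matching M" "matching M'" using assms(1,2) by (simp_all add: stable_matching)
  assume "blocking_pair S P A sp lect lp c d ?N s p"
  then have acc: "acceptable_pair S P A lect s p" and "(s, p) \<notin> ?N"
    and stud: "(\<forall>q. (s, q) \<notin> ?N) \<or> (\<exists>q. (s, q) \<in> ?N \<and> sp s p q)"
    and cond: "(card (Mp ?N p) < c p \<and> card (Ml ?N lect ?l) < d ?l) \<or>
      (card (Mp ?N p) < c p \<and> card (Ml ?N lect ?l) = d ?l \<and> s \<in> Ml ?N lect ?l) \<or>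
      (card (Mp ?N p) < c p \<and> card (Ml ?N lect ?l) = d ?l \<and> prefers_to_worst lp ?l (Ml ?N lect ?l) s) \<or>
      (card (Mp ?N p) = c p \<and> prefers_to_worst lp ?l (Mp ?N p) s)"
    unfolding blocking_pair_def Let_def by blast+
  have s: "s \<in> S" and p: "p \<in> P" using acc by (simp_all add: acceptable_pair_def)
  have order: "strict_total_on (lect_list S A lect P ?l) (lp ?l)" using lp_order[OF lect_in_L[OF p]] .
  have pref_meet: "\<forall>q. (s, q) \<in> ?N \<longrightarrow> sp s p q"
    using stud single_valued_prefers_iff[OF meet_single_valued[OF m], where s = s and r = "sp s"]
    by blast
  then have "\<forall>q. (s, q) \<in> meet sp M' M \<longrightarrow> sp s p q" using meet_sym[of M' M] by simp
  then have pref: "\<forall>q. (s, q) \<in> M \<longrightarrow> sp s p q" "\<forall>q. (s, q) \<in> M' \<longrightarrow> sp s p q"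
    using prefers_to_meet_imp_prefers[OF m s pref_meet] prefers_to_meet_imp_prefers[OF m(2,1) s]
    by blast+
  then have not_in: "(s, p) \<notin> M" "(s, p) \<notin> M'"
    using strict_total_on_irrefl[OF sp_order[OF s]] by blast+
  have "Mp ?N p \<subseteq> Mp M p \<union> Mp M' p" using meet_subset[of M M'] by (auto simp: Mp_def)
  then have "\<forall>u\<in>Mp ?N p. lp ?l u s"
    using stable_project_above[OF assms(1) acc not_in(1) pref(1)]
      stable_project_above[OF assms(2) acc not_in(2) pref(2)] by blast
  then have under: "card (Mp ?N p) < c p"
    using cond not_prefers_to_worst_if_all_above[where lp = lp and l = "lect p", OF order] by blast
  then have full: "card (Ml ?N lect ?l) = d ?l" and above: "\<forall>u\<in>Ml M lect ?l \<union> Ml M' lect ?l. lp ?l u s"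
    using meet_lecturer_above[OF assms acc not_in(1) pref(1) not_in(2) pref(2)] by simp_all
  have "Ml ?N lect ?l \<subseteq> Ml M lect ?l \<union> Ml M' lect ?l" using meet_subset[of M M'] by (auto simp: Ml_def)
  then have "\<forall>u\<in>Ml ?N lect ?l. lp ?l u s" using above by blast
  then have "s \<notin> Ml ?N lect ?l" "\<not> prefers_to_worst lp ?l (Ml ?N lect ?l) s"
    using strict_total_on_irrefl[OF order] not_prefers_to_worst_if_all_above[where lp = lp and l = "lect p", OF order] by blast+
  then show False using cond full under by simp
qed

lemma meet_stable: "stable M \<Longrightarrow> stable M' \<Longrightarrow> stable (meet sp M M')"
  using meet_is_matching meet_no_blocking_pair by (simp add: spa_stable_def)

end

theorem lemma8:
  assumes "spa_instance S P L A sp lect lp c d"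
    and "spa_stable S P A sp lect lp c d M"
    and "spa_stable S P A sp lect lp c d M'"
  shows "spa_stable S P A sp lect lp c d (meet sp M M')"
  using spa.meet_stable[OF spa.intro[OF assms(1)] assms(2,3)] .

end
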